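(* Suppose $Q$ satisfies Condition Q and the assignment satisfies Conditions MT and Close (stated in the context). Then for $r\in\{1,2\}$ and each $d\in\mathcal D$, \[ \frac1n\sum_{i=1}^{|\mathcal D|n}Y_i(d)^rI\{D_i=d\}\xrightarrow{P}E[Y_i(d)^r]. \]
   Context: Let $\mathcal D=\{1,\dots,|\mathcal D|\}$; $J_n=|\mathcal D|n$ units with $W_i=(Y_i(1),\dots,Y_i(|\mathcal D|),X_i)$ i.i.d. with distribution $Q$ (covariates $X_i$, Euclidean norm $|\cdot|$); $D_i\in\mathcal D$ is treatment; $A^{(n)}=(A_1,\dots,A_{J_n})$. Condition Q: for every $d$: (a) $E[\mathrm{Var}[Y_i(d)\mid X_i]]>0$; (b) $E[Y_i(d)^2]<\infty$; (c) $E[Y_i(d)\mid X_i=x]$, $E[Y_i(d)^2\mid X_i=x]$, $\mathrm{Var}[Y_i(d)\mid X_i=x]$ Lipschitz in $x$. Blocks $\lambda_j=\lambda_j(X^{(n)})$, $1\le j\le n$, sets of $|\mathcal D|$ elements partitioning $\{1,\dots,J_n\}$. Condition MT: $\{Y^{(n)}(d)\}_d\perp D^{(n)}\mid X^{(n)}$ and, given $X^{(n)}$, $(D_i:i\in\lambda_j)$ are i.i.d. across $j$, uniform over permutations of $(1,\dots,|\mathcal D|)$. Condition Close: $\frac1n\sum_j\max_{i,k\in\lambda_j}|X_i-X_k|^2\xrightarrow{P}0$. *)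

theory Defs
  imports "HOL-Probability.Probability"
begin

definition conv_in_prob :: "'a measure \<Rightarrow> (nat \<Rightarrow> 'a \<Rightarrow> real) \<Rightarrow> real \<Rightarrow> bool" where
  "conv_in_prob M Z c \<longleftrightarrow>
     (\<forall>e>0. (\<lambda>n. measure M {\<omega> \<in> space M. \<bar>Z n \<omega> - c\<bar> > e}) \<longlonglongrightarrow> 0)"

definition sigma_of :: "'a measure \<Rightarrow> ('a \<Rightarrow> 'b::topological_space) \<Rightarrow> 'a measure" where
  "sigma_of M X = vimage_algebra (space M) X borel"

definition block_assignments :: "nat \<Rightarrow> nat \<Rightarrow> (nat \<Rightarrow> nat set) \<Rightarrow> (nat \<Rightarrow> nat) set" where
  "block_assignments K n B =
     {a \<in> {..<K*n} \<rightarrow>\<^sub>E {1..K}. \<forall>j<n. bij_betw a (B j) {1..K}}"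

text \<open>Measurable space of one unit W_i = ((Y_i(d))_{d in {1..K}}, X_i).\<close>
definition unit_space :: "nat \<Rightarrow> ((nat \<Rightarrow> real) \<times> 'x::euclidean_space) measure" where
  "unit_space K = PiM {1..K} (\<lambda>_. borel) \<Otimes>\<^sub>M borel"

definition unit_rv :: "nat \<Rightarrow> (nat \<Rightarrow> nat \<Rightarrow> 'a \<Rightarrow> real) \<Rightarrow> (nat \<Rightarrow> 'a \<Rightarrow> 'x)
    \<Rightarrow> nat \<Rightarrow> 'a \<Rightarrow> (nat \<Rightarrow> real) \<times> 'x" where
  "unit_rv K Y X i \<omega> = (restrict (\<lambda>d. Y i d \<omega>) {1..K}, X i \<omega>)"

end

theory Submission
  imports Defs "HOL-Combinatorics.Transposition"
begin

text \<open>
  Write the treated average of a function \<open>\<psi>\<close> of the units as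
  \<open>(1/n) \<Sum> \<psi>(W\<^sub>i) I{D\<^sub>i = d} = (1/(K n)) \<Sum> \<psi>(W\<^sub>i) + (1/n) \<Sum> \<psi>(W\<^sub>i) (I{D\<^sub>i = d} - 1/K)\<close>.
  For bounded \<open>\<psi>\<close> the first term has variance \<open>O(1/n)\<close> because the units are i.i.d.
  For the second term, condition on the units: since treatments are permuted uniformly and
  independently within blocks, the centred indicators of units in different blocks are
  uncorrelated (a counting argument on block assignments), so only the \<open>n\<close> within-block
  terms contribute and its second moment is again \<open>O(1/n)\<close>. A general integrable \<open>\<psi>\<close> is
  reduced to the bounded case by truncation, whose \<open>L\<^sup>1\<close> error is uniform in \<open>n\<close>.
\<close>

section \<open>Counting block assignments\<close>

definition swap_values_on :: "'a set \<Rightarrow> 'b \<Rightarrow> 'b \<Rightarrow> ('a \<Rightarrow> 'b) \<Rightarrow> 'a \<Rightarrow> 'b" where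
  "swap_values_on B d e a = (\<lambda>x. if x \<in> B then Transposition.transpose d e (a x) else a x)"

lemma swap_values_on_involutory [simp]:
  "swap_values_on B d e (swap_values_on B d e a) = a"
  by (auto simp: swap_values_on_def)

lemma swap_values_on_apply [simp]:
  "x \<in> B \<Longrightarrow> swap_values_on B d e a x = Transposition.transpose d e (a x)"
  "x \<notin> B \<Longrightarrow> swap_values_on B d e a x = a x"
  by (simp_all add: swap_values_on_def)

lemma card_eq_card_mult_card_fiber:
  fixes T :: "('a \<Rightarrow> 'b) set"
  assumes "finite T" "finite S" "i \<in> B" "d \<in> S"
    and values_in_S: "\<And>a. a \<in> T \<Longrightarrow> a i \<in> S"
    and closed: "\<And>a e. a \<in> T \<Longrightarrow> e \<in> S \<Longrightarrow> swap_values_on B d e a \<in> T"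
  shows "card T = card S * card {a\<in>T. a i = d}"
proof -
  have same_card: "card {a\<in>T. a i = e} = card {a\<in>T. a i = d}" if "e \<in> S" for e
  proof -
    have "bij_betw (swap_values_on B d e) {a\<in>T. a i = d} {a\<in>T. a i = e}"
      by (rule bij_betw_byWitness[where f'="swap_values_on B d e"])
         (use closed that \<open>i \<in> B\<close> in auto)
    then show ?thesis
      by (simp add: bij_betw_same_card)
  qed
  have "T = (\<Union>e\<in>S. {a\<in>T. a i = e})"
    using values_in_S by auto
  then have "card T = card (\<Union>e\<in>S. {a\<in>T. a i = e})"
    by simp
  also have "\<dots> = (\<Sum>e\<in>S. card {a\<in>T. a i = e})"
    by (rule card_UN_disjoint) (use assms(1,2) in auto)
  also have "\<dots> = card S * card {a\<in>T. a i = d}"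
    using same_card by simp
  finally show ?thesis .
qed

lemma abs_sum_le_card_mult: "(\<And>i. i \<in> A \<Longrightarrow> \<bar>f i\<bar> \<le> c) \<Longrightarrow> \<bar>\<Sum>i\<in>A. f i\<bar> \<le> real (card A) * (c::real)"
  by (rule order_trans[OF sum_abs sum_bounded_above])

lemma abs_mult_centered_indicator_le:
  assumes "\<bar>x\<bar> \<le> c"
  shows "\<bar>x * (of_bool P - 1 / real K)\<bar> \<le> (c::real)"
proof -
  have indicator_le: "\<bar>of_bool P - 1 / real K\<bar> \<le> (1::real)"
    by (cases K) (auto simp: field_simps)
  show ?thesis
    using mult_mono[OF assms indicator_le] assms by (simp add: abs_mult)
qed

lemma block_assignments_subset: "block_assignments K n B \<subseteq> {..<K*n} \<rightarrow>\<^sub>E {1..K}"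
  by (auto simp: block_assignments_def)

lemma block_assignments_value: "a \<in> block_assignments K n B \<Longrightarrow> i < K*n \<Longrightarrow> a i \<in> {1..K}"
  by (rule PiE_mem[OF subsetD[OF block_assignments_subset]]) auto

lemma finite_block_assignments: "finite (block_assignments K n B)"
  by (rule finite_subset[OF block_assignments_subset]) (auto intro: finite_PiE)

locale block_partition =
  fixes K n :: nat and B :: "nat \<Rightarrow> nat set"
  assumes block_subset: "\<And>j. j < n \<Longrightarrow> B j \<subseteq> {..<K*n}"
    and card_block: "\<And>j. j < n \<Longrightarrow> card (B j) = K"
    and blocks_disjoint: "\<And>j j'. j < n \<Longrightarrow> j' < n \<Longrightarrow> j \<noteq> j' \<Longrightarrow> B j \<inter> B j' = {}"
    and blocks_cover: "(\<Union>j<n. B j) = {..<K*n}"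
begin

lemma finite_block: "j < n \<Longrightarrow> finite (B j)"
  using block_subset finite_subset by blast

lemma sum_over_blocks: "(\<Sum>i<K*n. f i) = (\<Sum>j<n. \<Sum>i\<in>B j. f i)"
  unfolding blocks_cover[symmetric] by (rule sum.UNION_disjoint) (use finite_block blocks_disjoint in auto)

lemma block_assignments_nonempty: "block_assignments K n B \<noteq> {}"
proof -
  have "\<exists>f. bij_betw f (B j) {1..K}" if "j < n" for j
    using finite_same_card_bij[OF finite_block[OF that], of "{1..K}"] card_block[OF that] by simp
  then obtain f where f: "\<And>j. j < n \<Longrightarrow> bij_betw (f j) (B j) {1..K}"
    by metis
  define block_of where "block_of x = (THE j. j < n \<and> x \<in> B j)" for x
  have block_of: "block_of x = j" if "j < n" "x \<in> B j" for x j
    unfolding block_of_def using that blocks_disjoint by (intro the_equality) auto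
  define a where "a = restrict (\<lambda>x. f (block_of x) x) {..<K*n}"
  have a_on_block: "bij_betw a (B j) {1..K}" if "j < n" for j
    by (rule bij_betw_cong[THEN iffD1, OF _ f[OF that]])
       (use block_of that block_subset[OF that] in \<open>auto simp: a_def\<close>)
  have "a \<in> {..<K*n} \<rightarrow>\<^sub>E {1..K}"
  proof
    fix x assume "x \<in> {..<K*n}"
    then obtain j where j: "j < n" "x \<in> B j"
      using blocks_cover by auto
    show "a x \<in> {1..K}"
      using bij_betw_apply[OF a_on_block[OF j(1)] j(2)] .
  qed (simp add: a_def)
  with a_on_block have "a \<in> block_assignments K n B"
    by (simp add: block_assignments_def)
  then show ?thesis
    by auto
qed

lemma swap_values_on_block_in_block_assignments:
  assumes a: "a \<in> block_assignments K n B" and j: "j < n" and "d \<in> {1..K}" "e \<in> {1..K}"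
  shows "swap_values_on (B j) d e a \<in> block_assignments K n B"
  unfolding block_assignments_def
proof (intro CollectI conjI allI impI)
  show "swap_values_on (B j) d e a \<in> {..<K*n} \<rightarrow>\<^sub>E {1..K}"
    using subsetD[OF block_assignments_subset a] block_subset[OF j] \<open>d \<in> {1..K}\<close> \<open>e \<in> {1..K}\<close>
    by (auto simp: PiE_iff swap_values_on_def Transposition.transpose_def extensional_def)
  fix j' assume j': "j' < n"
  have a_bij: "bij_betw a (B j') {1..K}"
    using a j' by (simp add: block_assignments_def)
  show "bij_betw (swap_values_on (B j) d e a) (B j') {1..K}"
  proof (cases "j' = j")
    case True
    have "bij_betw (Transposition.transpose d e \<circ> a) (B j') {1..K}"
      using a_bij \<open>d \<in> {1..K}\<close> \<open>e \<in> {1..K}\<close> by (auto intro: bij_betw_trans)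
    then show ?thesis
      by (rule bij_betw_cong[THEN iffD1, rotated]) (simp add: True swap_values_on_def)
  next
    case False
    then have "B j \<inter> B j' = {}"
      using blocks_disjoint j j' by auto
    then show ?thesis
      by (intro bij_betw_cong[THEN iffD1, OF _ a_bij]) (auto simp: swap_values_on_def)
  qed
qed

lemma card_block_assignments_eq_mult_fiber:
  assumes "j < n" "i \<in> B j" "d \<in> {1..K}"
  shows "card (block_assignments K n B) = K * card {a \<in> block_assignments K n B. a i = d}"
proof -
  have "i < K*n"
    using assms block_subset by auto
  then show ?thesis
    using card_eq_card_mult_card_fiber[OF finite_block_assignments _ assms(2,3)]
      swap_values_on_block_in_block_assignments[OF _ assms(1,3)] block_assignments_value by simp
qed

lemma card_block_assignments_eq_mult_fiber2:
  assumes "j < n" "i \<in> B j" "j' < n" "k \<in> B j'" "j \<noteq> j'" "d \<in> {1..K}"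
  shows "card (block_assignments K n B) = K * K * card {a \<in> block_assignments K n B. a i = d \<and> a k = d}"
proof -
  let ?T = "{a \<in> block_assignments K n B. a k = d}"
  have "k \<notin> B j" "i < K*n"
    using assms blocks_disjoint block_subset by auto
  have "card ?T = card {1..K} * card {a \<in> ?T. a i = d}"
  proof (rule card_eq_card_mult_card_fiber[where B = "B j"])
    show "finite ?T"
      using finite_block_assignments by simp
    show "a i \<in> {1..K}" if "a \<in> ?T" for a
      using that \<open>i < K*n\<close> block_assignments_value by blast
    show "swap_values_on (B j) d e a \<in> ?T" if "a \<in> ?T" "e \<in> {1..K}" for a e
      using that \<open>k \<notin> B j\<close> swap_values_on_block_in_block_assignments[OF _ assms(1,6)] by simp
  qed (use assms(2,6) in simp_all)
  moreover have "{a \<in> ?T. a i = d} = {a \<in> block_assignments K n B. a i = d \<and> a k = d}"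
    by auto
  ultimately show ?thesis
    using card_block_assignments_eq_mult_fiber[OF assms(3,4,6)] by simp
qed

lemma sum_block_assignments_centered_indicators_product:
  assumes "j < n" "i \<in> B j" "j' < n" "k \<in> B j'" "j \<noteq> j'" "d \<in> {1..K}"
  shows "(\<Sum>a \<in> block_assignments K n B.
            (of_bool (a i = d) - 1 / real K) * (of_bool (a k = d) - 1 / real K)) = 0"
proof -
  let ?A = "block_assignments K n B"
  let ?m = "real (card ?A)"
  have "K > 0"
    using assms(1,2) card_block finite_block by (metis card_gt_0_iff empty_iff)
  have fiber_i: "(\<Sum>a\<in>?A. of_bool (a i = d)) = ?m / K"
    using card_block_assignments_eq_mult_fiber[OF assms(1,2,6)] \<open>K > 0\<close> finite_block_assignments by (simp add: Int_def)
  have fiber_k: "(\<Sum>a\<in>?A. of_bool (a k = d)) = ?m / K"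
    using card_block_assignments_eq_mult_fiber[OF assms(3,4,6)] \<open>K > 0\<close> finite_block_assignments by (simp add: Int_def)
  have fiber_ik: "(\<Sum>a\<in>?A. of_bool (a i = d) * of_bool (a k = d)) = ?m / (K * K)"
    using card_block_assignments_eq_mult_fiber2[OF assms] \<open>K > 0\<close> finite_block_assignments
    by (simp add: of_bool_conj[symmetric] Int_def)
  have "(\<Sum>a\<in>?A. (of_bool (a i = d) - 1 / real K) * (of_bool (a k = d) - 1 / real K))
      = (\<Sum>a\<in>?A. of_bool (a i = d) * of_bool (a k = d)) - (\<Sum>a\<in>?A. of_bool (a i = d)) / K
        - (\<Sum>a\<in>?A. of_bool (a k = d)) / K + ?m / (K * K)"
    by (simp add: algebra_simps sum.distrib sum_subtractf sum_divide_distrib[symmetric])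
  also have "\<dots> = 0"
    by (simp add: fiber_i fiber_k fiber_ik)
  finally show ?thesis .
qed

lemma sum_block_assignments_block_sums_orthogonal:
  assumes "j < n" "j' < n" "j \<noteq> j'" "d \<in> {1..K}"
  shows "(\<Sum>a \<in> block_assignments K n B.
            (\<Sum>i\<in>B j. \<psi> i * (of_bool (a i = d) - 1 / real K)) *
            (\<Sum>k\<in>B j'. \<psi> k * (of_bool (a k = d) - 1 / real K))) = 0"
proof -
  let ?A = "block_assignments K n B"
  define E where "E a i = of_bool (a i = d) - 1 / real K" for a :: "nat \<Rightarrow> nat" and i
  have "(\<Sum>a\<in>?A. (\<Sum>i\<in>B j. \<psi> i * E a i) * (\<Sum>k\<in>B j'. \<psi> k * E a k))
      = (\<Sum>a\<in>?A. \<Sum>i\<in>B j. \<Sum>k\<in>B j'. \<psi> i * \<psi> k * (E a i * E a k))"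
    unfolding sum_product by (simp add: ac_simps)
  also have "\<dots> = (\<Sum>i\<in>B j. \<Sum>k\<in>B j'. \<psi> i * \<psi> k * (\<Sum>a\<in>?A. E a i * E a k))"
    by (subst sum.swap, rule sum.cong[OF refl], subst sum.swap) (simp add: sum_distrib_left)
  also have "\<dots> = 0"
    using sum_block_assignments_centered_indicators_product[OF assms(1) _ assms(2) _ assms(3,4)]
    by (simp add: E_def)
  finally show ?thesis
    by (simp add: E_def)
qed

lemma sum_block_assignments_sq_le:
  fixes \<psi> :: "nat \<Rightarrow> real"
  assumes "d \<in> {1..K}" and \<psi>_bound: "\<And>i. \<bar>\<psi> i\<bar> \<le> c"
  shows "(\<Sum>a \<in> block_assignments K n B. (\<Sum>i<K*n. \<psi> i * (of_bool (a i = d) - 1 / real K))\<^sup>2)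
         \<le> real (card (block_assignments K n B)) * (real n * (real K * c)\<^sup>2)"
proof -
  let ?A = "block_assignments K n B"
  define V where "V a j = (\<Sum>i\<in>B j. \<psi> i * (of_bool (a i = d) - 1 / real K))" for a j
  have "c \<ge> 0"
    using \<psi>_bound[of 0] by simp
  have V_sq_le: "(V a j)\<^sup>2 \<le> (real K * c)\<^sup>2" if "j < n" for a j
  proof -
    have "\<bar>V a j\<bar> \<le> real (card (B j)) * c"
      unfolding V_def by (rule abs_sum_le_card_mult, rule abs_mult_centered_indicator_le, rule \<psi>_bound)
    with card_block[OF that] \<open>c \<ge> 0\<close> show ?thesis
      by (simp add: abs_le_square_iff[symmetric])
  qed
  have "(\<Sum>a\<in>?A. (\<Sum>i<K*n. \<psi> i * (of_bool (a i = d) - 1 / real K))\<^sup>2)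
      = (\<Sum>j<n. \<Sum>j'<n. \<Sum>a\<in>?A. V a j * V a j')"
    unfolding sum_over_blocks V_def[symmetric] power2_eq_square sum_product
    by (subst sum.swap, rule sum.cong[OF refl], subst sum.swap) simp
  also have "\<dots> = (\<Sum>j<n. \<Sum>a\<in>?A. (V a j)\<^sup>2)"
  proof (rule sum.cong[OF refl])
    fix j assume "j \<in> {..<n}"
    then show "(\<Sum>j'<n. \<Sum>a\<in>?A. V a j * V a j') = (\<Sum>a\<in>?A. (V a j)\<^sup>2)"
      using sum_block_assignments_block_sums_orthogonal[OF _ _ _ assms(1)]
      by (subst sum.remove[of _ j]) (auto intro!: sum.neutral simp: V_def power2_eq_square)
  qed
  also have "\<dots> \<le> (\<Sum>j<n. \<Sum>a\<in>?A. (real K * c)\<^sup>2)"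
    using V_sq_le by (intro sum_mono) simp
  also have "\<dots> = real (card ?A) * (real n * (real K * c)\<^sup>2)"
    by simp
  finally show ?thesis .
qed

end

section \<open>Second moments and convergence in probability\<close>

lemma integral_weighted_comp_eqI:
  fixes f g :: "'a \<Rightarrow> real"
  assumes X: "X \<in> M \<rightarrow>\<^sub>M N" and h: "h \<in> borel_measurable N"
    and f: "f \<in> borel_measurable M" "\<And>\<omega>. 0 \<le> f \<omega>" "integrable M f"
    and g: "g \<in> borel_measurable M" "\<And>\<omega>. 0 \<le> g \<omega>" "integrable M g"
    and eq_on_sets: "\<And>B. B \<in> sets N \<Longrightarrow>
      (\<integral>\<omega>. f \<omega> * indicator B (X \<omega>) \<partial>M) = (\<integral>\<omega>. g \<omega> * indicator B (X \<omega>) \<partial>M)"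
  shows "(\<integral>\<omega>. f \<omega> * h (X \<omega>) \<partial>M) = (\<integral>\<omega>. g \<omega> * h (X \<omega>) \<partial>M)"
proof -
  have emeasure_weighted: "emeasure (distr (density M w) N X) B = ennreal (\<integral>\<omega>. w \<omega> * indicator B (X \<omega>) \<partial>M)"
    if w: "w \<in> borel_measurable M" "\<And>\<omega>. 0 \<le> w \<omega>" "integrable M w" and B: "B \<in> sets N"
    for w :: "'a \<Rightarrow> real" and B
  proof -
    have preimage: "X -` B \<inter> space M \<in> sets M"
      using X B by measurable
    have "emeasure (distr (density M w) N X) B = (\<integral>\<^sup>+\<omega>\<in>X -` B \<inter> space M. ennreal (w \<omega>) \<partial>M)"
      using X B w(1) preimage by (simp add: emeasure_distr emeasure_density)
    also have "\<dots> = (\<integral>\<^sup>+\<omega>. ennreal (w \<omega> * indicator B (X \<omega>)) \<partial>M)"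
      by (intro nn_integral_cong) (simp split: split_indicator)
    also have "\<dots> = ennreal (\<integral>\<omega>. w \<omega> * indicator B (X \<omega>) \<partial>M)"
    proof (intro nn_integral_eq_integral)
      show "integrable M (\<lambda>\<omega>. w \<omega> * indicator B (X \<omega>))"
      proof (rule Bochner_Integration.integrable_bound[OF w(3)])
        show "(\<lambda>\<omega>. w \<omega> * indicator B (X \<omega>)) \<in> borel_measurable M"
          using X B w(1) by measurable
      qed (simp add: indicator_def)
    qed (simp add: w(2))
    finally show ?thesis .
  qed
  have same_law: "distr (density M f) N X = distr (density M g) N X"
    by (rule measure_eqI) (simp_all add: emeasure_weighted f g eq_on_sets)
  have integral_weighted: "(\<integral>\<omega>. w \<omega> * h (X \<omega>) \<partial>M) = integral\<^sup>L (distr (density M w) N X) h"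
    if "w \<in> borel_measurable M" "\<And>\<omega>. 0 \<le> w \<omega>" for w :: "'a \<Rightarrow> real"
    using that X h by (simp add: integral_distr integral_density)
  show ?thesis
    using f g by (simp add: integral_weighted same_law)
qed

lemma (in prob_space) integral_mult_eq_0_of_indep_centered:
  fixes h :: "'i \<Rightarrow> 'a \<Rightarrow> real"
  assumes "indep_vars (\<lambda>_. borel) h I" "i \<in> I" "k \<in> I" "i \<noteq> k"
    and "integrable M (h i)" "integrable M (h k)" "(\<integral>\<omega>. h i \<omega> \<partial>M) = 0"
  shows "(\<integral>\<omega>. h i \<omega> * h k \<omega> \<partial>M) = 0"
proof -
  have "indep_vars (\<lambda>_. borel) h {i, k}"
    by (rule indep_vars_subset[OF assms(1)]) (use assms(2,3) in auto)
  then have "(\<integral>\<omega>. (\<Prod>j\<in>{i, k}. h j \<omega>) \<partial>M) = (\<Prod>j\<in>{i, k}. \<integral>\<omega>. h j \<omega> \<partial>M)"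
    using assms(5,6) by (intro indep_vars_lebesgue_integral) auto
  then show ?thesis
    using assms(4,7) by simp
qed

lemma (in prob_space) integral_sq_sum_le_of_indep_centered:
  fixes h :: "'i \<Rightarrow> 'a \<Rightarrow> real"
  assumes indep: "indep_vars (\<lambda>_. borel) h I" and "finite A" "A \<subseteq> I"
    and bound: "\<And>i \<omega>. i \<in> A \<Longrightarrow> \<bar>h i \<omega>\<bar> \<le> b"
    and centered: "\<And>i. i \<in> A \<Longrightarrow> (\<integral>\<omega>. h i \<omega> \<partial>M) = 0"
  shows "(\<integral>\<omega>. (\<Sum>i\<in>A. h i \<omega>)\<^sup>2 \<partial>M) \<le> real (card A) * b\<^sup>2"
proof -
  have meas: "h i \<in> borel_measurable M" if "i \<in> A" for i
    using indep that \<open>A \<subseteq> I\<close> by (auto simp: indep_vars_def)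
  have integrable: "integrable M (h i)" if "i \<in> A" for i
    using bound that meas by (intro integrable_const_bound[where B=b]) auto
  have product_le: "\<bar>h i \<omega> * h k \<omega>\<bar> \<le> b\<^sup>2" if "i \<in> A" "k \<in> A" for i k \<omega>
    using bound[OF that(1), of \<omega>] bound[OF that(2), of \<omega>]
    by (simp add: abs_mult power2_eq_square mult_mono order_trans[OF abs_ge_zero])
  have integrable_product: "integrable M (\<lambda>\<omega>. h i \<omega> * h k \<omega>)" if "i \<in> A" "k \<in> A" for i k
    using that meas product_le by (intro integrable_const_bound[where B="b\<^sup>2"]) auto
  have "(\<integral>\<omega>. (\<Sum>i\<in>A. h i \<omega>)\<^sup>2 \<partial>M) = (\<Sum>i\<in>A. \<Sum>k\<in>A. \<integral>\<omega>. h i \<omega> * h k \<omega> \<partial>M)"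
    using integrable_product by (simp add: power2_eq_square sum_product)
  also have "\<dots> = (\<Sum>i\<in>A. \<integral>\<omega>. h i \<omega> * h i \<omega> \<partial>M)"
  proof (rule sum.cong[OF refl])
    fix i assume "i \<in> A"
    have "(\<Sum>k\<in>A - {i}. \<integral>\<omega>. h i \<omega> * h k \<omega> \<partial>M) = 0"
    proof (intro sum.neutral ballI)
      fix k assume "k \<in> A - {i}"
      then show "(\<integral>\<omega>. h i \<omega> * h k \<omega> \<partial>M) = 0"
        using \<open>i \<in> A\<close> \<open>A \<subseteq> I\<close> integrable centered
        by (intro integral_mult_eq_0_of_indep_centered[OF indep]) auto
    qed
    then show "(\<Sum>k\<in>A. \<integral>\<omega>. h i \<omega> * h k \<omega> \<partial>M) = (\<integral>\<omega>. h i \<omega> * h i \<omega> \<partial>M)"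
      by (simp add: sum.remove[OF \<open>finite A\<close> \<open>i \<in> A\<close>])
  qed
  also have "\<dots> \<le> (\<Sum>i\<in>A. b\<^sup>2)"
  proof (intro sum_mono integral_le_const AE_I2)
    fix i \<omega> assume "i \<in> A"
    then show "integrable M (\<lambda>\<omega>. h i \<omega> * h i \<omega>)" "h i \<omega> * h i \<omega> \<le> b\<^sup>2"
      using integrable_product product_le[of i i \<omega>] by auto
  qed
  finally show ?thesis
    by simp
qed

lemma (in finite_measure) integrable_sq_of_bounded:
  fixes f :: "'a \<Rightarrow> real"
  assumes "f \<in> borel_measurable M" "\<And>\<omega>. \<bar>f \<omega>\<bar> \<le> b"
  shows "integrable M (\<lambda>\<omega>. (f \<omega>)\<^sup>2)"
proof (rule integrable_const_bound[where B="b\<^sup>2"])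
  have "(f \<omega>)\<^sup>2 \<le> b\<^sup>2" for \<omega>
    using assms(2)[of \<omega>] by (simp add: abs_le_square_iff[symmetric])
  then show "AE \<omega> in M. norm ((f \<omega>)\<^sup>2) \<le> b\<^sup>2"
    by simp
qed (use assms(1) in measurable)

lemma
  fixes f g :: "'a \<Rightarrow> real"
  assumes "f \<in> borel_measurable M" "g \<in> borel_measurable M"
    and f_sq: "integrable M (\<lambda>\<omega>. (f \<omega>)\<^sup>2)" and g_sq: "integrable M (\<lambda>\<omega>. (g \<omega>)\<^sup>2)"
  shows integrable_sq_add: "integrable M (\<lambda>\<omega>. (f \<omega> + g \<omega>)\<^sup>2)"
    and integral_sq_add_le:
      "(\<integral>\<omega>. (f \<omega> + g \<omega>)\<^sup>2 \<partial>M) \<le> 2 * (\<integral>\<omega>. (f \<omega>)\<^sup>2 \<partial>M) + 2 * (\<integral>\<omega>. (g \<omega>)\<^sup>2 \<partial>M)"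
proof -
  have sq_le: "(f \<omega> + g \<omega>)\<^sup>2 \<le> 2 * (f \<omega>)\<^sup>2 + 2 * (g \<omega>)\<^sup>2" for \<omega>
    using sum_squares_ge_zero[of "f \<omega> - g \<omega>" 0] by (simp add: power2_eq_square algebra_simps)
  have bound_int: "integrable M (\<lambda>\<omega>. 2 * (f \<omega>)\<^sup>2 + 2 * (g \<omega>)\<^sup>2)"
    using f_sq g_sq by simp
  show int: "integrable M (\<lambda>\<omega>. (f \<omega> + g \<omega>)\<^sup>2)"
    using assms(1,2) sq_le
    by (intro Bochner_Integration.integrable_bound[OF bound_int]) (auto intro!: AE_I2)
  have "(\<integral>\<omega>. (f \<omega> + g \<omega>)\<^sup>2 \<partial>M) \<le> (\<integral>\<omega>. 2 * (f \<omega>)\<^sup>2 + 2 * (g \<omega>)\<^sup>2 \<partial>M)"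
    by (rule integral_mono[OF int bound_int sq_le])
  then show "(\<integral>\<omega>. (f \<omega> + g \<omega>)\<^sup>2 \<partial>M) \<le> 2 * (\<integral>\<omega>. (f \<omega>)\<^sup>2 \<partial>M) + 2 * (\<integral>\<omega>. (g \<omega>)\<^sup>2 \<partial>M)"
    using f_sq g_sq by simp
qed

definition truncate_at :: "real \<Rightarrow> real \<Rightarrow> real" where
  "truncate_at c x = max (- c) (min c x)"

lemma abs_truncate_at_le: "0 \<le> c \<Longrightarrow> \<bar>truncate_at c x\<bar> \<le> c"
  by (auto simp: truncate_at_def)

lemma truncate_at_eq: "\<bar>x\<bar> \<le> c \<Longrightarrow> truncate_at c x = x"
  by (auto simp: truncate_at_def)

lemma borel_measurable_truncate_at [measurable]: "truncate_at c \<in> borel_measurable borel"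
  unfolding truncate_at_def by measurable

lemma eventually_truncate_at_eq: "\<forall>\<^sub>F m in sequentially. truncate_at (real m) x = x"
proof (rule eventually_sequentiallyI)
  fix m assume "nat \<lceil>\<bar>x\<bar>\<rceil> \<le> m"
  then show "truncate_at (real m) x = x"
    by (intro truncate_at_eq) linarith
qed

lemma
  fixes f :: "'a \<Rightarrow> real"
  assumes "integrable M f"
  shows tendsto_integral_truncate_at: "(\<lambda>m. \<integral>\<omega>. truncate_at (real m) (f \<omega>) \<partial>M) \<longlonglongrightarrow> (\<integral>\<omega>. f \<omega> \<partial>M)"
    and tendsto_integral_truncation_error: "(\<lambda>m. \<integral>\<omega>. \<bar>f \<omega> - truncate_at (real m) (f \<omega>)\<bar> \<partial>M) \<longlonglongrightarrow> 0"
proof -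
  have [measurable]: "f \<in> borel_measurable M"
    using assms by simp
  have bounds: "\<bar>truncate_at (real m) x\<bar> \<le> \<bar>x\<bar>" "\<bar>x - truncate_at (real m) x\<bar> \<le> \<bar>x\<bar>" for m x
    by (auto simp: truncate_at_def)
  have "AE \<omega> in M. (\<lambda>m. truncate_at (real m) (f \<omega>)) \<longlonglongrightarrow> f \<omega>"
    by (intro AE_I2 tendsto_eventually eventually_truncate_at_eq)
  then show "(\<lambda>m. \<integral>\<omega>. truncate_at (real m) (f \<omega>) \<partial>M) \<longlonglongrightarrow> (\<integral>\<omega>. f \<omega> \<partial>M)"
    by (rule integral_dominated_convergence[where w="\<lambda>\<omega>. \<bar>f \<omega>\<bar>", rotated 3])
      (use assms bounds in \<open>auto\<close>)
  have "AE \<omega> in M. (\<lambda>m. \<bar>f \<omega> - truncate_at (real m) (f \<omega>)\<bar>) \<longlonglongrightarrow> 0"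
  proof (intro AE_I2 tendsto_eventually)
    fix \<omega>
    show "\<forall>\<^sub>F m in sequentially. \<bar>f \<omega> - truncate_at (real m) (f \<omega>)\<bar> = 0"
      using eventually_truncate_at_eq[of "f \<omega>"] by eventually_elim simp
  qed
  then have "(\<lambda>m. \<integral>\<omega>. \<bar>f \<omega> - truncate_at (real m) (f \<omega>)\<bar> \<partial>M) \<longlonglongrightarrow> (\<integral>\<omega>. 0 \<partial>M)"
    by (rule integral_dominated_convergence[where w="\<lambda>\<omega>. \<bar>f \<omega>\<bar>", rotated 3])
      (use assms bounds in \<open>auto\<close>)
  then show "(\<lambda>m. \<integral>\<omega>. \<bar>f \<omega> - truncate_at (real m) (f \<omega>)\<bar> \<partial>M) \<longlonglongrightarrow> 0"
    by simp
qed

lemma (in prob_space) measure_deviation_le_by_approximation: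
  fixes Z Z' :: "'a \<Rightarrow> real"
  assumes "\<epsilon> > 0" "\<bar>c' - c\<bar> \<le> \<epsilon> / 4"
    and L1_int: "integrable M (\<lambda>\<omega>. \<bar>Z \<omega> - Z' \<omega>\<bar>)"
    and Z'_meas: "Z' \<in> borel_measurable M" and L2_int: "integrable M (\<lambda>\<omega>. (Z' \<omega> - c')\<^sup>2)"
  shows "measure M {\<omega> \<in> space M. \<bar>Z \<omega> - c\<bar> > \<epsilon>}
    \<le> (\<integral>\<omega>. \<bar>Z \<omega> - Z' \<omega>\<bar> \<partial>M) / (\<epsilon> / 4) + (\<integral>\<omega>. (Z' \<omega> - c')\<^sup>2 \<partial>M) / (\<epsilon> / 2)\<^sup>2"
proof -
  let ?far = "{\<omega> \<in> space M. \<bar>Z \<omega> - Z' \<omega>\<bar> \<ge> \<epsilon> / 4}"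
  let ?dev = "{\<omega> \<in> space M. \<bar>Z' \<omega> - c'\<bar> \<ge> \<epsilon> / 2}"
  have dev_meas: "(\<lambda>\<omega>. Z' \<omega> - c') \<in> borel_measurable M"
    using Z'_meas by measurable
  have sets: "?far \<in> sets M" "?dev \<in> sets M"
    using borel_measurable_integrable[OF L1_int] dev_meas by measurable
  have "{\<omega> \<in> space M. \<bar>Z \<omega> - c\<bar> > \<epsilon>} \<subseteq> ?far \<union> ?dev"
  proof
    fix \<omega> assume \<omega>: "\<omega> \<in> {\<omega> \<in> space M. \<bar>Z \<omega> - c\<bar> > \<epsilon>}"
    have "\<bar>Z \<omega> - c\<bar> \<le> \<bar>Z \<omega> - Z' \<omega>\<bar> + \<bar>Z' \<omega> - c'\<bar> + \<bar>c' - c\<bar>"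
      by linarith
    with \<omega> \<open>\<bar>c' - c\<bar> \<le> \<epsilon> / 4\<close> show "\<omega> \<in> ?far \<union> ?dev"
      by auto
  qed
  then have "measure M {\<omega> \<in> space M. \<bar>Z \<omega> - c\<bar> > \<epsilon>} \<le> measure M ?far + measure M ?dev"
    using sets by (intro order_trans[OF finite_measure_mono measure_Un_le]) auto
  also have "measure M ?far \<le> (\<integral>\<omega>. \<bar>Z \<omega> - Z' \<omega>\<bar> \<partial>M) / (\<epsilon> / 4)"
    using L1_int \<open>\<epsilon> > 0\<close> by (intro integral_Markov_inequality_measure[OF _ sets.top]) auto
  also have "measure M ?dev \<le> (\<integral>\<omega>. (Z' \<omega> - c')\<^sup>2 \<partial>M) / (\<epsilon> / 2)\<^sup>2"
    using dev_meas L2_int \<open>\<epsilon> > 0\<close> by (intro second_moment_method) auto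
  finally show ?thesis
    by simp
qed

lemma (in prob_space) conv_in_prob_by_approximation:
  fixes Z :: "nat \<Rightarrow> 'a \<Rightarrow> real" and Z' :: "nat \<Rightarrow> nat \<Rightarrow> 'a \<Rightarrow> real"
  assumes L1_int: "\<And>m n. integrable M (\<lambda>\<omega>. \<bar>Z n \<omega> - Z' m n \<omega>\<bar>)"
    and L1_le: "\<And>m n. (\<integral>\<omega>. \<bar>Z n \<omega> - Z' m n \<omega>\<bar> \<partial>M) \<le> e m" and e_lim: "e \<longlonglongrightarrow> 0"
    and c'_lim: "c' \<longlonglongrightarrow> c"
    and Z'_meas: "\<And>m n. Z' m n \<in> borel_measurable M"
    and L2_int: "\<And>m. \<forall>\<^sub>F n in sequentially. integrable M (\<lambda>\<omega>. (Z' m n \<omega> - c' m)\<^sup>2)"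
    and L2_lim: "\<And>m. (\<lambda>n. \<integral>\<omega>. (Z' m n \<omega> - c' m)\<^sup>2 \<partial>M) \<longlonglongrightarrow> 0"
  shows "conv_in_prob M Z c"
  unfolding conv_in_prob_def
proof (intro allI impI order_tendstoI)
  fix \<epsilon> r :: real assume "\<epsilon> > 0" "r > 0"
  define \<delta> where "\<delta> = min (\<epsilon> / 4) (r * \<epsilon> / 8)"
  have "\<delta> > 0" "\<delta> \<le> \<epsilon> / 4" "\<delta> / (\<epsilon> / 4) \<le> r / 2"
    using \<open>\<epsilon> > 0\<close> \<open>r > 0\<close> by (auto simp: \<delta>_def field_simps)
  have "\<forall>\<^sub>F m in sequentially. e m < \<delta> \<and> dist (c' m) c < \<delta>"
    using order_tendstoD(2)[OF e_lim \<open>\<delta> > 0\<close>] tendstoD[OF c'_lim \<open>\<delta> > 0\<close>] by eventually_elim simp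
  then obtain m where e_m: "e m < \<delta>" and c'_m: "\<bar>c' m - c\<bar> \<le> \<delta>"
    by (auto simp: eventually_sequentially dist_real_def)
  have "\<forall>\<^sub>F n in sequentially. (\<integral>\<omega>. (Z' m n \<omega> - c' m)\<^sup>2 \<partial>M) < r / 2 * (\<epsilon> / 2)\<^sup>2"
    using \<open>\<epsilon> > 0\<close> \<open>r > 0\<close> by (intro order_tendstoD(2)[OF L2_lim]) simp
  with L2_int[of m] show "\<forall>\<^sub>F n in sequentially. measure M {\<omega> \<in> space M. \<bar>Z n \<omega> - c\<bar> > \<epsilon>} < r"
  proof eventually_elim
    case (elim n)
    have "measure M {\<omega> \<in> space M. \<bar>Z n \<omega> - c\<bar> > \<epsilon>}
        \<le> (\<integral>\<omega>. \<bar>Z n \<omega> - Z' m n \<omega>\<bar> \<partial>M) / (\<epsilon> / 4) + (\<integral>\<omega>. (Z' m n \<omega> - c' m)\<^sup>2 \<partial>M) / (\<epsilon> / 2)\<^sup>2"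
      using \<open>\<epsilon> > 0\<close> c'_m \<open>\<delta> \<le> \<epsilon> / 4\<close> L1_int Z'_meas elim
      by (intro measure_deviation_le_by_approximation) auto
    also have "\<dots> < r / 2 + r / 2"
    proof (rule add_le_less_mono)
      have "(\<integral>\<omega>. \<bar>Z n \<omega> - Z' m n \<omega>\<bar> \<partial>M) / (\<epsilon> / 4) \<le> \<delta> / (\<epsilon> / 4)"
        using L1_le[of n m] e_m \<open>\<epsilon> > 0\<close> by (intro divide_right_mono) auto
      with \<open>\<delta> / (\<epsilon> / 4) \<le> r / 2\<close> show "(\<integral>\<omega>. \<bar>Z n \<omega> - Z' m n \<omega>\<bar> \<partial>M) / (\<epsilon> / 4) \<le> r / 2"
        by linarith
      show "(\<integral>\<omega>. (Z' m n \<omega> - c' m)\<^sup>2 \<partial>M) / (\<epsilon> / 2)\<^sup>2 < r / 2"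
        using elim \<open>\<epsilon> > 0\<close> by (simp add: pos_divide_less_eq)
    qed
    finally show ?case
      by simp
  qed
qed (simp add: measure_nonneg less_le_trans)

section \<open>Randomization within blocks\<close>

lemma sum_pmf_of_set_mult:
  fixes F :: "'b \<Rightarrow> real"
  assumes "finite C" "finite A" "A \<noteq> {}" "A \<subseteq> C"
  shows "(\<Sum>a\<in>C. pmf (pmf_of_set A) a * F a) = (\<Sum>a\<in>A. F a) / card A"
proof -
  have "(\<Sum>a\<in>C. pmf (pmf_of_set A) a * F a) = (\<Sum>a\<in>C. of_bool (a \<in> A) * F a) / card A"
    unfolding sum_divide_distrib using assms by (intro sum.cong) (simp_all add: indicator_def)
  also have "\<dots> = (\<Sum>a\<in>A. F a) / card A"
    using assms by (simp add: Int_absorb1)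
  finally show ?thesis .
qed

(* Condition MT for units W i with values in an arbitrary space S and blocks L n j forming any
   measurable random partition; in the paper S is the space of (Y(1), ..., Y(K), X) and the
   blocks are functions of the covariates. *)
locale block_randomized_design = prob_space M
  for M :: "'a measure" and S :: "'b measure" and K :: nat
    and W :: "nat \<Rightarrow> 'a \<Rightarrow> 'b" and D :: "nat \<Rightarrow> nat \<Rightarrow> 'a \<Rightarrow> nat"
    and L :: "nat \<Rightarrow> nat \<Rightarrow> 'a \<Rightarrow> nat set" +
  assumes K_pos: "0 < K"
    and W_measurable: "\<And>i. W i \<in> M \<rightarrow>\<^sub>M S"
    and D_measurable: "\<And>n i. D n i \<in> M \<rightarrow>\<^sub>M count_space UNIV"
    and L_measurable: "\<And>n j. L n j \<in> M \<rightarrow>\<^sub>M count_space UNIV"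
    and L_partition: "\<And>n \<omega>. block_partition K n (\<lambda>j. L n j \<omega>)"
    and uniform_within_blocks: "\<And>n Bs a. Bs \<in> sets (PiM {..<K*n} (\<lambda>_. S)) \<Longrightarrow>
      measure M {\<omega> \<in> space M. restrict (\<lambda>i. W i \<omega>) {..<K*n} \<in> Bs \<and> restrict (\<lambda>i. D n i \<omega>) {..<K*n} = a}
      = (\<integral>\<omega>. indicator Bs (restrict (\<lambda>i. W i \<omega>) {..<K*n}) *
            pmf (pmf_of_set (block_assignments K n (\<lambda>j. L n j \<omega>))) a \<partial>M)"
begin

declare W_measurable [measurable] D_measurable [measurable]

definition W_upto :: "nat \<Rightarrow> 'a \<Rightarrow> nat \<Rightarrow> 'b" where
  "W_upto n \<omega> = restrict (\<lambda>i. W i \<omega>) {..<K*n}"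

definition D_upto :: "nat \<Rightarrow> 'a \<Rightarrow> nat \<Rightarrow> nat" where
  "D_upto n \<omega> = restrict (\<lambda>i. D n i \<omega>) {..<K*n}"

definition assignments :: "nat \<Rightarrow> 'a \<Rightarrow> (nat \<Rightarrow> nat) set" where
  "assignments n \<omega> = block_assignments K n (\<lambda>j. L n j \<omega>)"

lemma finite_assignments: "finite (assignments n \<omega>)"
  by (simp add: assignments_def finite_block_assignments)

lemma assignments_nonempty: "assignments n \<omega> \<noteq> {}"
  using block_partition.block_assignments_nonempty[OF L_partition] by (simp add: assignments_def)

lemma assignments_subset: "assignments n \<omega> \<subseteq> {..<K*n} \<rightarrow>\<^sub>E {1..K}"
  unfolding assignments_def by (rule block_assignments_subset)

lemma measurable_W_upto [measurable]: "W_upto n \<in> M \<rightarrow>\<^sub>M PiM {..<K*n} (\<lambda>_. S)"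
  unfolding W_upto_def by measurable

lemma borel_measurable_fun_assignments: "(\<lambda>\<omega>. G (assignments n \<omega>) :: real) \<in> borel_measurable M"
proof -
  let ?blocks = "\<lambda>\<omega>. restrict (\<lambda>j. L n j \<omega>) {..<n}"
  have "?blocks \<in> M \<rightarrow>\<^sub>M count_space ({..<n} \<rightarrow>\<^sub>E Pow {..<K*n})"
  proof (rule measurable_count_space_eq2[THEN iffD2], simp add: finite_PiE, intro conjI ballI)
    show "?blocks \<in> space M \<rightarrow> {..<n} \<rightarrow>\<^sub>E Pow {..<K*n}"
      using block_partition.block_subset[OF L_partition] by auto
    fix c assume "c \<in> {..<n} \<rightarrow>\<^sub>E Pow {..<K*n}"
    then have "?blocks -` {c} \<inter> space M = {\<omega> \<in> space M. \<forall>j\<in>{..<n}. L n j \<omega> = c j}"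
      by (auto simp: PiE_def extensional_def fun_eq_iff)
    also have "\<dots> \<in> sets M"
      using L_measurable by (intro sets.sets_Collect_finite_All) (auto simp: measurable_count_space_eq1)
    finally show "?blocks -` {c} \<inter> space M \<in> sets M" .
  qed
  moreover have "assignments n \<omega> = block_assignments K n (?blocks \<omega>)" for \<omega>
    by (auto simp: assignments_def block_assignments_def)
  ultimately show ?thesis
    by (simp add: measurable_comp[where g="\<lambda>c. G (block_assignments K n c)", simplified comp_def])
qed

lemma sets_D_upto_eq: "{\<omega> \<in> space M. D_upto n \<omega> = a} \<in> sets M"
proof (cases "a \<in> extensional {..<K*n}")
  case True
  then have "{\<omega> \<in> space M. D_upto n \<omega> = a} = {\<omega> \<in> space M. \<forall>i\<in>{..<K*n}. D n i \<omega> = a i}"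
    by (auto simp: D_upto_def extensional_def fun_eq_iff)
  also have "\<dots> \<in> sets M"
    by measurable
  finally show ?thesis .
next
  case False
  then have "{\<omega> \<in> space M. D_upto n \<omega> = a} = {}"
    by (auto simp: D_upto_def)
  then show ?thesis
    by (metis sets.empty_sets)
qed

lemma measurable_D_upto: "D_upto n \<in> M \<rightarrow>\<^sub>M count_space ({..<K*n} \<rightarrow>\<^sub>E UNIV)"
proof (rule measurable_count_space_eq_countable[THEN iffD2], simp add: countable_PiE, intro conjI ballI)
  show "D_upto n \<in> space M \<rightarrow> {..<K*n} \<rightarrow>\<^sub>E UNIV"
    by (simp add: D_upto_def)
  fix a
  have "D_upto n -` {a} \<inter> space M = {\<omega> \<in> space M. D_upto n \<omega> = a}"
    by auto
  then show "D_upto n -` {a} \<inter> space M \<in> sets M"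
    using sets_D_upto_eq by simp
qed

lemma integral_indicator_D_upto_eq:
  assumes h: "h \<in> borel_measurable (PiM {..<K*n} (\<lambda>_. S))"
  shows "(\<integral>\<omega>. indicator {\<omega> \<in> space M. D_upto n \<omega> = a} \<omega> * h (W_upto n \<omega>) \<partial>M)
       = (\<integral>\<omega>. pmf (pmf_of_set (assignments n \<omega>)) a * h (W_upto n \<omega>) \<partial>M)"
proof (rule integral_weighted_comp_eqI[OF measurable_W_upto h])
  let ?E = "{\<omega> \<in> space M. D_upto n \<omega> = a}"
  show "indicator ?E \<in> borel_measurable M" "integrable M (indicator ?E :: 'a \<Rightarrow> real)"
    using sets_D_upto_eq by (auto intro!: integrable_const_bound[where B=1])
  show "(\<lambda>\<omega>. pmf (pmf_of_set (assignments n \<omega>)) a) \<in> borel_measurable M"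
    by (rule borel_measurable_fun_assignments)
  then show "integrable M (\<lambda>\<omega>. pmf (pmf_of_set (assignments n \<omega>)) a)"
    by (intro integrable_const_bound[where B=1]) (simp_all add: pmf_le_1)
  fix Bs assume Bs: "Bs \<in> sets (PiM {..<K*n} (\<lambda>_. S))"
  have "{\<omega> \<in> space M. W_upto n \<omega> \<in> Bs \<and> D_upto n \<omega> = a} = (W_upto n -` Bs \<inter> space M) \<inter> ?E"
    by auto
  then have joint: "{\<omega> \<in> space M. W_upto n \<omega> \<in> Bs \<and> D_upto n \<omega> = a} \<in> sets M"
    using Bs sets_D_upto_eq by (simp add: sets.Int measurable_sets)
  have "(\<integral>\<omega>. indicator ?E \<omega> * indicator Bs (W_upto n \<omega>) \<partial>M)
      = (\<integral>\<omega>. indicator {\<omega> \<in> space M. W_upto n \<omega> \<in> Bs \<and> D_upto n \<omega> = a} \<omega> \<partial>M :: real)"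
    by (intro Bochner_Integration.integral_cong) (auto simp: indicator_def)
  also have "\<dots> = measure M {\<omega> \<in> space M. W_upto n \<omega> \<in> Bs \<and> D_upto n \<omega> = a}"
    using joint by simp
  also have "\<dots> = (\<integral>\<omega>. pmf (pmf_of_set (assignments n \<omega>)) a * indicator Bs (W_upto n \<omega>) \<partial>M)"
    using uniform_within_blocks[OF Bs] by (simp add: W_upto_def D_upto_def assignments_def mult.commute)
  finally show "(\<integral>\<omega>. indicator ?E \<omega> * indicator Bs (W_upto n \<omega>) \<partial>M)
      = (\<integral>\<omega>. pmf (pmf_of_set (assignments n \<omega>)) a * indicator Bs (W_upto n \<omega>) \<partial>M)" .
qed auto

lemma integrable_pmf_assignments_mult:
  assumes "g \<in> borel_measurable M" "\<And>\<omega>. \<bar>g \<omega>\<bar> \<le> C"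
  shows "integrable M (\<lambda>\<omega>. pmf (pmf_of_set (assignments n \<omega>)) a * g \<omega>)"
proof (rule integrable_const_bound[where B=C])
  have "\<bar>pmf (pmf_of_set (assignments n \<omega>)) a * g \<omega>\<bar> \<le> 1 * C" for \<omega>
    unfolding abs_mult using assms(2)[of \<omega>]
    by (intro mult_mono) (auto simp: pmf_le_1 order_trans[OF abs_ge_zero])
  then show "AE \<omega> in M. norm (pmf (pmf_of_set (assignments n \<omega>)) a * g \<omega>) \<le> C"
    by simp
qed (use assms(1) borel_measurable_fun_assignments in measurable)

lemma AE_D_upto_in_candidates: "AE \<omega> in M. D_upto n \<omega> \<in> {..<K*n} \<rightarrow>\<^sub>E {1..K}"
proof -
  let ?C = "{..<K*n} \<rightarrow>\<^sub>E {1..K}"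
  have "finite ?C"
    by (simp add: finite_PiE)
  have "{\<omega> \<in> space M. D_upto n \<omega> \<in> ?C} = (\<Union>a\<in>?C. {\<omega> \<in> space M. D_upto n \<omega> = a})"
    by auto
  then have "prob {\<omega> \<in> space M. D_upto n \<omega> \<in> ?C} = prob (\<Union>a\<in>?C. {\<omega> \<in> space M. D_upto n \<omega> = a})"
    by simp
  also have "\<dots> = (\<Sum>a\<in>?C. prob {\<omega> \<in> space M. D_upto n \<omega> = a})"
    using \<open>finite ?C\<close> sets_D_upto_eq
    by (intro measure_finite_Union) (auto simp: disjoint_family_on_def)
  also have "\<dots> = (\<Sum>a\<in>?C. \<integral>\<omega>. pmf (pmf_of_set (assignments n \<omega>)) a \<partial>M)"
    using integral_indicator_D_upto_eq[of "\<lambda>_. 1"] sets_D_upto_eq by simp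
  also have "\<dots> = (\<integral>\<omega>. (\<Sum>a\<in>?C. pmf (pmf_of_set (assignments n \<omega>)) a) \<partial>M)"
    using integrable_pmf_assignments_mult[of "\<lambda>_. 1" 1] by simp
  also have "\<dots> = 1"
    using sum_pmf_of_set_mult[OF \<open>finite ?C\<close> finite_assignments assignments_nonempty assignments_subset,
        where F = "\<lambda>_. 1"] finite_assignments assignments_nonempty
    by (simp add: prob_space)
  finally have "prob {\<omega> \<in> space M. D_upto n \<omega> \<in> ?C} = 1" .
  from AE_prob_1[OF this] show ?thesis
    by simp
qed

lemma integral_comp_D_upto_eq_sum:
  fixes H :: "(nat \<Rightarrow> nat) \<Rightarrow> (nat \<Rightarrow> 'b) \<Rightarrow> real"
  assumes H_meas: "\<And>a. H a \<in> borel_measurable (PiM {..<K*n} (\<lambda>_. S))"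
    and H_bound: "\<And>a w. \<bar>H a w\<bar> \<le> C"
  shows "(\<integral>\<omega>. H (D_upto n \<omega>) (W_upto n \<omega>) \<partial>M)
    = (\<Sum>a \<in> {..<K*n} \<rightarrow>\<^sub>E {1..K}. \<integral>\<omega>. indicator {\<omega> \<in> space M. D_upto n \<omega> = a} \<omega> * H a (W_upto n \<omega>) \<partial>M)"
proof -
  let ?C = "{..<K*n} \<rightarrow>\<^sub>E {1..K}"
  let ?E = "\<lambda>a. {\<omega> \<in> space M. D_upto n \<omega> = a}"
  have "finite ?C"
    by (simp add: finite_PiE)
  have "0 \<le> C"
    using H_bound by (meson abs_ge_zero order_trans)
  have HW [measurable]: "(\<lambda>\<omega>. H a (W_upto n \<omega>)) \<in> borel_measurable M" for a
    using H_meas by measurable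
  have integrable_E: "integrable M (\<lambda>\<omega>. indicator (?E a) \<omega> * H a (W_upto n \<omega>))" for a
    using sets_D_upto_eq H_bound \<open>0 \<le> C\<close>
    by (intro integrable_const_bound[where B=C]) (auto simp: indicator_def)
  have "(\<integral>\<omega>. H (D_upto n \<omega>) (W_upto n \<omega>) \<partial>M)
      = (\<integral>\<omega>. (\<Sum>a\<in>?C. indicator (?E a) \<omega> * H a (W_upto n \<omega>)) \<partial>M)"
  proof (rule integral_cong_AE)
    show "(\<lambda>\<omega>. H (D_upto n \<omega>) (W_upto n \<omega>)) \<in> borel_measurable M"
      by (rule measurable_compose_countable'[OF HW measurable_D_upto]) (simp add: countable_PiE)
    show "(\<lambda>\<omega>. \<Sum>a\<in>?C. indicator (?E a) \<omega> * H a (W_upto n \<omega>)) \<in> borel_measurable M"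
      using integrable_E by auto
    show "AE \<omega> in M. H (D_upto n \<omega>) (W_upto n \<omega>) = (\<Sum>a\<in>?C. indicator (?E a) \<omega> * H a (W_upto n \<omega>))"
      using AE_D_upto_in_candidates[of n] AE_space
    proof eventually_elim
      case (elim \<omega>)
      then have "(\<Sum>a\<in>?C. indicator (?E a) \<omega> * H a (W_upto n \<omega>))
          = (\<Sum>a\<in>?C. if a = D_upto n \<omega> then H a (W_upto n \<omega>) else 0)"
        by (intro sum.cong) (auto simp: indicator_def)
      also have "\<dots> = H (D_upto n \<omega>) (W_upto n \<omega>)"
        using elim \<open>finite ?C\<close> by simp
      finally show ?case
        by simp
    qed
  qed
  also have "\<dots> = (\<Sum>a\<in>?C. \<integral>\<omega>. indicator (?E a) \<omega> * H a (W_upto n \<omega>) \<partial>M)"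
    using integrable_E by simp
  finally show ?thesis .
qed

lemma
  fixes H :: "(nat \<Rightarrow> nat) \<Rightarrow> (nat \<Rightarrow> 'b) \<Rightarrow> real"
  assumes H_meas: "\<And>a. H a \<in> borel_measurable (PiM {..<K*n} (\<lambda>_. S))"
    and H_bound: "\<And>a w. \<bar>H a w\<bar> \<le> C"
  shows integral_D_upto_eq_average: "(\<integral>\<omega>. H (D_upto n \<omega>) (W_upto n \<omega>) \<partial>M)
      = (\<integral>\<omega>. (\<Sum>a\<in>assignments n \<omega>. H a (W_upto n \<omega>)) / card (assignments n \<omega>) \<partial>M)"
    and integrable_average_assignments:
      "integrable M (\<lambda>\<omega>. (\<Sum>a\<in>assignments n \<omega>. H a (W_upto n \<omega>)) / card (assignments n \<omega>))"
proof -
  let ?C = "{..<K*n} \<rightarrow>\<^sub>E {1..K}"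
  let ?p = "\<lambda>a \<omega>. pmf (pmf_of_set (assignments n \<omega>)) a"
  have integrable_p: "integrable M (\<lambda>\<omega>. ?p a \<omega> * H a (W_upto n \<omega>))" for a
    using H_bound H_meas by (intro integrable_pmf_assignments_mult) auto
  have average: "(\<Sum>a\<in>assignments n \<omega>. H a (W_upto n \<omega>)) / card (assignments n \<omega>)
      = (\<Sum>a\<in>?C. ?p a \<omega> * H a (W_upto n \<omega>))" for \<omega>
    using finite_assignments assignments_nonempty assignments_subset
    by (intro sum_pmf_of_set_mult[symmetric]) (simp_all add: finite_PiE)
  have "(\<integral>\<omega>. H (D_upto n \<omega>) (W_upto n \<omega>) \<partial>M)
      = (\<Sum>a\<in>?C. \<integral>\<omega>. indicator {\<omega> \<in> space M. D_upto n \<omega> = a} \<omega> * H a (W_upto n \<omega>) \<partial>M)"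
    by (rule integral_comp_D_upto_eq_sum[OF H_meas H_bound])
  also have "\<dots> = (\<Sum>a\<in>?C. \<integral>\<omega>. ?p a \<omega> * H a (W_upto n \<omega>) \<partial>M)"
    using H_meas by (simp add: integral_indicator_D_upto_eq)
  also have "\<dots> = (\<integral>\<omega>. (\<Sum>a\<in>?C. ?p a \<omega> * H a (W_upto n \<omega>)) \<partial>M)"
    using integrable_p by simp
  finally show "(\<integral>\<omega>. H (D_upto n \<omega>) (W_upto n \<omega>) \<partial>M)
      = (\<integral>\<omega>. (\<Sum>a\<in>assignments n \<omega>. H a (W_upto n \<omega>)) / card (assignments n \<omega>) \<partial>M)"
    by (simp add: average)
  show "integrable M (\<lambda>\<omega>. (\<Sum>a\<in>assignments n \<omega>. H a (W_upto n \<omega>)) / card (assignments n \<omega>))"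
    using integrable_p by (simp add: average)
qed

lemma integral_sq_sum_centered_assignment_le:
  assumes \<psi>_meas: "\<psi> \<in> borel_measurable S" and \<psi>_bound: "\<And>w. \<bar>\<psi> w\<bar> \<le> c"
    and "d \<in> {1..K}"
  shows "(\<integral>\<omega>. (\<Sum>i<K*n. \<psi> (W i \<omega>) * (of_bool (D n i \<omega> = d) - 1 / real K))\<^sup>2 \<partial>M)
         \<le> real n * (real K * c)\<^sup>2"
proof -
  define H where "H a w = (\<Sum>i<K*n. \<psi> (w i) * (of_bool (a i = d) - 1 / real K))\<^sup>2"
    for a :: "nat \<Rightarrow> nat" and w :: "nat \<Rightarrow> 'b"
  have "c \<ge> 0"
    using \<psi>_bound by (meson abs_ge_zero order_trans)
  have H_meas: "H a \<in> borel_measurable (PiM {..<K*n} (\<lambda>_. S))" for a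
    unfolding H_def using \<psi>_meas by measurable
  have H_bound: "\<bar>H a w\<bar> \<le> (real (K*n) * c)\<^sup>2" for a w
  proof -
    have "\<bar>\<Sum>i<K*n. \<psi> (w i) * (of_bool (a i = d) - 1 / real K)\<bar> \<le> real (card {..<K*n}) * c"
      by (rule abs_sum_le_card_mult, rule abs_mult_centered_indicator_le, rule \<psi>_bound)
    then show ?thesis
      unfolding H_def using \<open>c \<ge> 0\<close> by (simp add: abs_le_square_iff[symmetric])
  qed
  have average_le: "(\<Sum>a\<in>assignments n \<omega>. H a (W_upto n \<omega>)) / card (assignments n \<omega>)
      \<le> real n * (real K * c)\<^sup>2" for \<omega>
  proof -
    have "(\<Sum>a\<in>assignments n \<omega>. H a (W_upto n \<omega>))
        \<le> real (card (assignments n \<omega>)) * (real n * (real K * c)\<^sup>2)"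
      unfolding H_def assignments_def
      by (rule block_partition.sum_block_assignments_sq_le[OF L_partition \<open>d \<in> {1..K}\<close> \<psi>_bound])
    then show ?thesis
      using finite_assignments assignments_nonempty by (simp add: divide_le_eq mult.commute)
  qed
  have "(\<integral>\<omega>. (\<Sum>i<K*n. \<psi> (W i \<omega>) * (of_bool (D n i \<omega> = d) - 1 / real K))\<^sup>2 \<partial>M)
      = (\<integral>\<omega>. H (D_upto n \<omega>) (W_upto n \<omega>) \<partial>M)"
    by (simp add: H_def D_upto_def W_upto_def)
  also have "\<dots> = (\<integral>\<omega>. (\<Sum>a\<in>assignments n \<omega>. H a (W_upto n \<omega>)) / card (assignments n \<omega>) \<partial>M)"
    by (rule integral_D_upto_eq_average[OF H_meas H_bound])
  also have "\<dots> \<le> (\<integral>\<omega>. real n * (real K * c)\<^sup>2 \<partial>M)"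
    using integrable_average_assignments[OF H_meas H_bound] average_le by (intro integral_mono) auto
  also have "\<dots> = real n * (real K * c)\<^sup>2"
    by (simp add: prob_space)
  finally show ?thesis .
qed

end

section \<open>Treated averages\<close>

locale iid_block_randomized_design = block_randomized_design +
  assumes W_indep: "indep_vars (\<lambda>_. S) W UNIV"
    and W_ident: "\<And>i. distr M S (W i) = distr M S (W 0)"
begin

lemma
  fixes g :: "'b \<Rightarrow> real"
  assumes "g \<in> borel_measurable S"
  shows integral_comp_W_eq: "(\<integral>\<omega>. g (W i \<omega>) \<partial>M) = (\<integral>\<omega>. g (W 0 \<omega>) \<partial>M)"
    and integrable_comp_W_iff: "integrable M (\<lambda>\<omega>. g (W i \<omega>)) \<longleftrightarrow> integrable M (\<lambda>\<omega>. g (W 0 \<omega>))"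
  using integral_distr[OF W_measurable assms, of i] integral_distr[OF W_measurable assms, of 0]
    integrable_distr_eq[OF W_measurable assms, of i] integrable_distr_eq[OF W_measurable assms, of 0]
  by (simp_all add: W_ident[of i])

definition treated_mean :: "('b \<Rightarrow> real) \<Rightarrow> nat \<Rightarrow> nat \<Rightarrow> 'a \<Rightarrow> real" where
  "treated_mean \<phi> d n \<omega> = 1 / real n * (\<Sum>i<K*n. \<phi> (W i \<omega>) * of_bool (D n i \<omega> = d))"

lemma treated_mean_diff:
  "treated_mean f d n \<omega> - treated_mean g d n \<omega> = treated_mean (\<lambda>w. f w - g w) d n \<omega>"
  by (simp add: treated_mean_def right_diff_distrib sum_subtractf left_diff_distrib)

lemma borel_measurable_treated_mean:
  assumes "\<phi> \<in> borel_measurable S"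
  shows "treated_mean \<phi> d n \<in> borel_measurable M"
  unfolding treated_mean_def using assms by measurable

lemma
  fixes g :: "'b \<Rightarrow> real"
  assumes g_meas: "g \<in> borel_measurable S" and g_int: "integrable M (\<lambda>\<omega>. g (W 0 \<omega>))"
  shows integrable_abs_treated_mean: "integrable M (\<lambda>\<omega>. \<bar>treated_mean g d n \<omega>\<bar>)"
    and integral_abs_treated_mean_le:
      "(\<integral>\<omega>. \<bar>treated_mean g d n \<omega>\<bar> \<partial>M) \<le> real K * (\<integral>\<omega>. \<bar>g (W 0 \<omega>)\<bar> \<partial>M)"
proof -
  define R where "R \<omega> = 1 / real n * (\<Sum>i<K*n. \<bar>g (W i \<omega>)\<bar>)" for \<omega>
  have integrable_i: "integrable M (\<lambda>\<omega>. \<bar>g (W i \<omega>)\<bar>)" for i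
    using g_int integrable_comp_W_iff[of "\<lambda>w. \<bar>g w\<bar>" i] g_meas by simp
  have R_int: "integrable M R"
    unfolding R_def using integrable_i by simp
  have abs_le_R: "\<bar>treated_mean g d n \<omega>\<bar> \<le> R \<omega>" for \<omega>
  proof -
    have "\<bar>\<Sum>i<K*n. g (W i \<omega>) * of_bool (D n i \<omega> = d)\<bar> \<le> (\<Sum>i<K*n. \<bar>g (W i \<omega>)\<bar>)"
      by (intro order_trans[OF sum_abs] sum_mono) (simp add: abs_mult)
    then show ?thesis
      by (simp add: treated_mean_def R_def abs_mult divide_right_mono)
  qed
  show "integrable M (\<lambda>\<omega>. \<bar>treated_mean g d n \<omega>\<bar>)"
  proof (rule Bochner_Integration.integrable_bound[OF R_int])
    show "(\<lambda>\<omega>. \<bar>treated_mean g d n \<omega>\<bar>) \<in> borel_measurable M"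
      using borel_measurable_treated_mean[OF g_meas] by measurable
    show "AE \<omega> in M. norm \<bar>treated_mean g d n \<omega>\<bar> \<le> norm (R \<omega>)"
      using abs_le_R by (intro AE_I2) (simp add: order_trans[OF _ abs_ge_self])
  qed
  then have "(\<integral>\<omega>. \<bar>treated_mean g d n \<omega>\<bar> \<partial>M) \<le> (\<integral>\<omega>. R \<omega> \<partial>M)"
    using R_int abs_le_R by (intro integral_mono)
  also have "\<dots> = 1 / real n * (\<Sum>i<K*n. \<integral>\<omega>. \<bar>g (W 0 \<omega>)\<bar> \<partial>M)"
    unfolding R_def using integrable_i g_meas
    by (simp add: sum.cong[OF refl integral_comp_W_eq[of "\<lambda>w. \<bar>g w\<bar>"]])
  also have "\<dots> \<le> real K * (\<integral>\<omega>. \<bar>g (W 0 \<omega>)\<bar> \<partial>M)"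
  proof (cases "n = 0")
    case True
    have "0 \<le> (\<integral>\<omega>. \<bar>g (W 0 \<omega>)\<bar> \<partial>M)"
      by (intro integral_nonneg_AE) simp
    with True show ?thesis
      by simp
  qed simp
  finally show "(\<integral>\<omega>. \<bar>treated_mean g d n \<omega>\<bar> \<partial>M) \<le> real K * (\<integral>\<omega>. \<bar>g (W 0 \<omega>)\<bar> \<partial>M)" .
qed

lemma integral_sq_sum_centered_W_le:
  assumes \<psi>_meas: "\<psi> \<in> borel_measurable S" and \<psi>_bound: "\<And>w. \<bar>\<psi> w\<bar> \<le> c"
  shows "(\<integral>\<omega>. (\<Sum>i<N. \<psi> (W i \<omega>) - (\<integral>\<omega>. \<psi> (W 0 \<omega>) \<partial>M))\<^sup>2 \<partial>M) \<le> real N * (2 * c)\<^sup>2"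
proof -
  let ?m = "\<integral>\<omega>. \<psi> (W 0 \<omega>) \<partial>M"
  have integrable_i: "integrable M (\<lambda>\<omega>. \<psi> (W i \<omega>))" for i
    using \<psi>_meas \<psi>_bound by (intro integrable_const_bound[where B=c]) auto
  have "\<bar>?m\<bar> \<le> c"
    using integrable_i \<psi>_bound by (intro order_trans[OF integral_abs_bound integral_le_const]) auto
  have indep: "indep_vars (\<lambda>_. borel) (\<lambda>i \<omega>. \<psi> (W i \<omega>) - ?m) UNIV"
    by (rule indep_vars_compose2[OF W_indep]) (use \<psi>_meas in measurable)
  have centered: "(\<integral>\<omega>. \<psi> (W i \<omega>) - ?m \<partial>M) = 0" for i
    using integrable_i integral_comp_W_eq[OF \<psi>_meas, of i] by (simp add: prob_space)
  have bound: "\<bar>\<psi> (W i \<omega>) - ?m\<bar> \<le> 2 * c" for i \<omega>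
    using \<psi>_bound[of "W i \<omega>"] \<open>\<bar>?m\<bar> \<le> c\<close> by linarith
  have "(\<integral>\<omega>. (\<Sum>i\<in>{..<N}. \<psi> (W i \<omega>) - ?m)\<^sup>2 \<partial>M) \<le> real (card {..<N}) * (2 * c)\<^sup>2"
    by (rule integral_sq_sum_le_of_indep_centered[OF indep finite_lessThan subset_UNIV bound centered])
  then show ?thesis
    by simp
qed

lemma treated_mean_minus_eq:
  assumes "n \<ge> 1"
  shows "treated_mean \<psi> d n \<omega> - m
    = (\<Sum>i<K*n. \<psi> (W i \<omega>) * (of_bool (D n i \<omega> = d) - 1 / real K)) / real n
      + (\<Sum>i<K*n. \<psi> (W i \<omega>) - m) / (real n * real K)"
proof -
  have centered_eq: "(\<Sum>i<K*n. \<psi> (W i \<omega>) * (of_bool (D n i \<omega> = d) - 1 / real K))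
      = (\<Sum>i<K*n. \<psi> (W i \<omega>) * of_bool (D n i \<omega> = d)) - (\<Sum>i<K*n. \<psi> (W i \<omega>)) / real K"
    by (simp add: right_diff_distrib sum_subtractf sum_divide_distrib)
  have sum_eq: "(\<Sum>i<K*n. \<psi> (W i \<omega>) - m) = (\<Sum>i<K*n. \<psi> (W i \<omega>)) - real K * real n * m"
    by (simp add: sum_subtractf)
  show ?thesis
    unfolding centered_eq sum_eq treated_mean_def using K_pos assms by (simp add: field_simps)
qed

lemma
  assumes \<psi>_meas: "\<psi> \<in> borel_measurable S" and \<psi>_bound: "\<And>w. \<bar>\<psi> w\<bar> \<le> c"
    and "d \<in> {1..K}" and "n \<ge> 1"
  shows integrable_sq_treated_mean_deviation:
      "integrable M (\<lambda>\<omega>. (treated_mean \<psi> d n \<omega> - (\<integral>\<omega>. \<psi> (W 0 \<omega>) \<partial>M))\<^sup>2)"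
    and integral_sq_treated_mean_deviation_le:
      "(\<integral>\<omega>. (treated_mean \<psi> d n \<omega> - (\<integral>\<omega>. \<psi> (W 0 \<omega>) \<partial>M))\<^sup>2 \<partial>M)
         \<le> 2 * ((real K * c)\<^sup>2 + (2 * c)\<^sup>2) / real n"
proof -
  let ?m = "\<integral>\<omega>. \<psi> (W 0 \<omega>) \<partial>M"
  define A where "A \<omega> = (\<Sum>i<K*n. \<psi> (W i \<omega>) * (of_bool (D n i \<omega> = d) - 1 / real K)) / real n" for \<omega>
  define B where "B \<omega> = (\<Sum>i<K*n. \<psi> (W i \<omega>) - ?m) / (real n * real K)" for \<omega>
  have "\<bar>?m\<bar> \<le> c"
    using \<psi>_meas \<psi>_bound
    by (intro order_trans[OF integral_abs_bound integral_le_const] integrable_const_bound[where B=c]) auto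
  have A_meas: "A \<in> borel_measurable M" and B_meas: "B \<in> borel_measurable M"
    unfolding A_def B_def using \<psi>_meas by measurable
  have "\<bar>\<Sum>i<K*n. \<psi> (W i \<omega>) * (of_bool (D n i \<omega> = d) - 1 / real K)\<bar> \<le> real (card {..<K*n}) * c" for \<omega>
    by (rule abs_sum_le_card_mult, rule abs_mult_centered_indicator_le, rule \<psi>_bound)
  then have A_sq: "integrable M (\<lambda>\<omega>. (A \<omega>)\<^sup>2)"
    unfolding A_def using \<psi>_meas \<open>n \<ge> 1\<close>
    by (intro integrable_sq_of_bounded[where b="real K * c"]) (auto simp: abs_divide pos_divide_le_eq mult_ac)
  have "\<bar>\<psi> (W i \<omega>) - ?m\<bar> \<le> 2 * c" for i \<omega>
    using \<psi>_bound[of "W i \<omega>"] \<open>\<bar>?m\<bar> \<le> c\<close> by linarith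
  then have "\<bar>\<Sum>i<K*n. \<psi> (W i \<omega>) - ?m\<bar> \<le> real (card {..<K*n}) * (2 * c)" for \<omega>
    by (rule abs_sum_le_card_mult)
  then have B_sq: "integrable M (\<lambda>\<omega>. (B \<omega>)\<^sup>2)"
    unfolding B_def using \<psi>_meas K_pos \<open>n \<ge> 1\<close>
    by (intro integrable_sq_of_bounded[where b="2 * c"]) (auto simp: abs_divide field_simps)
  have deviation: "treated_mean \<psi> d n \<omega> - ?m = A \<omega> + B \<omega>" for \<omega>
    unfolding A_def B_def by (rule treated_mean_minus_eq[OF \<open>n \<ge> 1\<close>])
  show "integrable M (\<lambda>\<omega>. (treated_mean \<psi> d n \<omega> - ?m)\<^sup>2)"
    unfolding deviation by (rule integrable_sq_add[OF A_meas B_meas A_sq B_sq])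
  have "(\<integral>\<omega>. (treated_mean \<psi> d n \<omega> - ?m)\<^sup>2 \<partial>M) \<le> 2 * (\<integral>\<omega>. (A \<omega>)\<^sup>2 \<partial>M) + 2 * (\<integral>\<omega>. (B \<omega>)\<^sup>2 \<partial>M)"
    unfolding deviation by (rule integral_sq_add_le[OF A_meas B_meas A_sq B_sq])
  also have "\<dots> \<le> 2 * ((real n * (real K * c)\<^sup>2) / (real n)\<^sup>2) + 2 * ((real (K*n) * (2 * c)\<^sup>2) / (real n * real K)\<^sup>2)"
    unfolding A_def B_def power_divide integral_divide_zero
    by (intro add_mono mult_left_mono divide_right_mono integral_sq_sum_centered_assignment_le
        integral_sq_sum_centered_W_le \<psi>_meas \<psi>_bound \<open>d \<in> {1..K}\<close>) simp_all
  also have "\<dots> = 2 * (real K * c)\<^sup>2 / real n + 2 * (2 * c)\<^sup>2 / (real K * real n)"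
    using K_pos \<open>n \<ge> 1\<close> by (simp add: power2_eq_square field_simps)
  also have "\<dots> \<le> 2 * (real K * c)\<^sup>2 / real n + 2 * (2 * c)\<^sup>2 / real n"
    using K_pos \<open>n \<ge> 1\<close> by (intro add_left_mono divide_left_mono) simp_all
  also have "\<dots> = 2 * ((real K * c)\<^sup>2 + (2 * c)\<^sup>2) / real n"
    by (simp add: add_divide_distrib distrib_left)
  finally show "(\<integral>\<omega>. (treated_mean \<psi> d n \<omega> - ?m)\<^sup>2 \<partial>M) \<le> 2 * ((real K * c)\<^sup>2 + (2 * c)\<^sup>2) / real n" .
qed

lemma tendsto_integral_sq_treated_mean_deviation:
  assumes "\<psi> \<in> borel_measurable S" "\<And>w. \<bar>\<psi> w\<bar> \<le> c" "d \<in> {1..K}"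
  shows "(\<lambda>n. \<integral>\<omega>. (treated_mean \<psi> d n \<omega> - (\<integral>\<omega>. \<psi> (W 0 \<omega>) \<partial>M))\<^sup>2 \<partial>M) \<longlonglongrightarrow> 0"
proof (rule tendsto_sandwich[OF _ _ tendsto_const lim_const_over_n])
  show "\<forall>\<^sub>F n in sequentially. 0 \<le> (\<integral>\<omega>. (treated_mean \<psi> d n \<omega> - (\<integral>\<omega>. \<psi> (W 0 \<omega>) \<partial>M))\<^sup>2 \<partial>M)"
    by (intro always_eventually allI integral_nonneg_AE) simp
  show "\<forall>\<^sub>F n in sequentially. (\<integral>\<omega>. (treated_mean \<psi> d n \<omega> - (\<integral>\<omega>. \<psi> (W 0 \<omega>) \<partial>M))\<^sup>2 \<partial>M)
      \<le> 2 * ((real K * c)\<^sup>2 + (2 * c)\<^sup>2) / real n"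
    by (rule eventually_sequentiallyI[of 1]) (rule integral_sq_treated_mean_deviation_le[OF assms])
qed

lemma conv_in_prob_treated_mean:
  assumes \<phi>_meas: "\<phi> \<in> borel_measurable S" and \<phi>_int: "integrable M (\<lambda>\<omega>. \<phi> (W 0 \<omega>))"
    and "d \<in> {1..K}"
  shows "conv_in_prob M (treated_mean \<phi> d) (\<integral>\<omega>. \<phi> (W 0 \<omega>) \<partial>M)"
proof -
  define \<psi> where "\<psi> m w = truncate_at (real m) (\<phi> w)" for m w
  have \<psi>_meas: "\<psi> m \<in> borel_measurable S" and \<psi>_bound: "\<bar>\<psi> m w\<bar> \<le> real m" for m w
    unfolding \<psi>_def using \<phi>_meas by (simp_all add: abs_truncate_at_le)
  have \<psi>_int: "integrable M (\<lambda>\<omega>. \<psi> m (W 0 \<omega>))" for m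
    using \<psi>_meas \<psi>_bound by (intro integrable_const_bound[where B="real m"]) auto
  have diff_meas: "(\<lambda>w. \<phi> w - \<psi> m w) \<in> borel_measurable S"
    and diff_int: "integrable M (\<lambda>\<omega>. \<phi> (W 0 \<omega>) - \<psi> m (W 0 \<omega>))" for m
    using \<phi>_meas \<psi>_meas \<phi>_int \<psi>_int by auto
  show ?thesis
  proof (rule conv_in_prob_by_approximation[where Z'="\<lambda>m. treated_mean (\<psi> m) d"
        and c'="\<lambda>m. \<integral>\<omega>. \<psi> m (W 0 \<omega>) \<partial>M" and e="\<lambda>m. real K * (\<integral>\<omega>. \<bar>\<phi> (W 0 \<omega>) - \<psi> m (W 0 \<omega>)\<bar> \<partial>M)"])
    fix m n
    show "integrable M (\<lambda>\<omega>. \<bar>treated_mean \<phi> d n \<omega> - treated_mean (\<psi> m) d n \<omega>\<bar>)"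
      using integrable_abs_treated_mean[OF diff_meas diff_int] by (simp add: treated_mean_diff)
    show "(\<integral>\<omega>. \<bar>treated_mean \<phi> d n \<omega> - treated_mean (\<psi> m) d n \<omega>\<bar> \<partial>M)
        \<le> real K * (\<integral>\<omega>. \<bar>\<phi> (W 0 \<omega>) - \<psi> m (W 0 \<omega>)\<bar> \<partial>M)"
      using integral_abs_treated_mean_le[OF diff_meas diff_int] by (simp add: treated_mean_diff)
    show "treated_mean (\<psi> m) d n \<in> borel_measurable M"
      by (rule borel_measurable_treated_mean[OF \<psi>_meas])
  next
    fix m
    show "\<forall>\<^sub>F n in sequentially. integrable M (\<lambda>\<omega>. (treated_mean (\<psi> m) d n \<omega> - (\<integral>\<omega>. \<psi> m (W 0 \<omega>) \<partial>M))\<^sup>2)"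
      by (rule eventually_sequentiallyI[of 1])
        (rule integrable_sq_treated_mean_deviation[OF \<psi>_meas \<psi>_bound \<open>d \<in> {1..K}\<close>])
    show "(\<lambda>n. \<integral>\<omega>. (treated_mean (\<psi> m) d n \<omega> - (\<integral>\<omega>. \<psi> m (W 0 \<omega>) \<partial>M))\<^sup>2 \<partial>M) \<longlonglongrightarrow> 0"
      by (rule tendsto_integral_sq_treated_mean_deviation[OF \<psi>_meas \<psi>_bound \<open>d \<in> {1..K}\<close>])
  next
    show "(\<lambda>m. real K * (\<integral>\<omega>. \<bar>\<phi> (W 0 \<omega>) - \<psi> m (W 0 \<omega>)\<bar> \<partial>M)) \<longlonglongrightarrow> 0"
      unfolding \<psi>_def by (rule tendsto_mult_right_zero[OF tendsto_integral_truncation_error[OF \<phi>_int]])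
    show "(\<lambda>m. \<integral>\<omega>. \<psi> m (W 0 \<omega>) \<partial>M) \<longlonglongrightarrow> (\<integral>\<omega>. \<phi> (W 0 \<omega>) \<partial>M)"
      unfolding \<psi>_def by (rule tendsto_integral_truncate_at[OF \<phi>_int])
  qed
qed

end

lemma unit_rv_component: "d \<in> {1..K} \<Longrightarrow> fst (unit_rv K Y X i \<omega>) d = Y i d \<omega>"
  by (simp add: unit_rv_def)

lemma borel_measurable_unit_component [measurable]:
  "d \<in> {1..K} \<Longrightarrow> (\<lambda>w. fst w d) \<in> borel_measurable (unit_space K)"
  unfolding unit_space_def by measurable

lemma conv_in_prob_treated_moment:
  fixes X :: "nat \<Rightarrow> 'a \<Rightarrow> 'x::euclidean_space"
  assumes "iid_block_randomized_design M (unit_space K) K (unit_rv K Y X) D L"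
    and d: "d \<in> {1..K}" and r: "r \<in> {1::nat, 2}" and square_int: "integrable M (\<lambda>\<omega>. (Y 0 d \<omega>)\<^sup>2)"
  shows "conv_in_prob M (\<lambda>n \<omega>. 1 / real n * (\<Sum>i<K*n. (Y i d \<omega>) ^ r * of_bool (D n i \<omega> = d)))
           (\<integral>\<omega>. (Y 0 d \<omega>) ^ r \<partial>M)"
proof -
  interpret design: iid_block_randomized_design M "unit_space K" K "unit_rv K Y X" D L
    by (fact assms(1))
  let ?\<phi> = "\<lambda>w :: (nat \<Rightarrow> real) \<times> 'x. (fst w d) ^ r"
  have \<phi>_meas: "?\<phi> \<in> borel_measurable (unit_space K)"
    using d by measurable
  have Y_meas: "Y 0 d \<in> borel_measurable M"
    using measurable_comp[OF design.W_measurable borel_measurable_unit_component[OF d]]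
    unfolding comp_def unit_rv_component[OF d] .
  have "integrable M (\<lambda>\<omega>. (Y 0 d \<omega>) ^ r)"
    using square_int r design.square_integrable_imp_integrable[OF Y_meas] by auto
  then have "conv_in_prob M (design.treated_mean ?\<phi> d) (\<integral>\<omega>. (Y 0 d \<omega>) ^ r \<partial>M)"
    using design.conv_in_prob_treated_mean[OF \<phi>_meas _ d] d by (simp add: unit_rv_component)
  moreover have "design.treated_mean ?\<phi> d
      = (\<lambda>n \<omega>. 1 / real n * (\<Sum>i<K*n. (Y i d \<omega>) ^ r * of_bool (D n i \<omega> = d)))"
    by (intro ext) (simp add: design.treated_mean_def unit_rv_component[OF d])
  ultimately show ?thesis
    by simp
qed

theorem lemmaC1:
  fixes M :: "'a measure" and K :: nat
    and Y :: "nat \<Rightarrow> nat \<Rightarrow> 'a \<Rightarrow> real"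
    and X :: "nat \<Rightarrow> 'a \<Rightarrow> 'x::euclidean_space"
    and D :: "nat \<Rightarrow> nat \<Rightarrow> 'a \<Rightarrow> nat"
    and lam :: "nat \<Rightarrow> nat \<Rightarrow> (nat \<Rightarrow> 'x) \<Rightarrow> nat set"
  assumes M: "prob_space M"
    and K: "K \<ge> 1"
    \<comment> \<open>W_i = ((Y_i(d))_d, X_i) i.i.d. with common distribution Q\<close>
    and indep: "prob_space.indep_vars M (\<lambda>_. unit_space K) (unit_rv K Y X) UNIV"
    and ident: "\<forall>i. distr M (unit_space K) (unit_rv K Y X i) = distr M (unit_space K) (unit_rv K Y X 0)"
    \<comment> \<open>Condition Q\<close>
    and Q_a: "\<forall>d\<in>{1..K}. (\<integral>\<omega>. real_cond_exp M (sigma_of M (X 0)) (\<lambda>\<omega>. (Y 0 d \<omega>)^2) \<omega>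
                 - (real_cond_exp M (sigma_of M (X 0)) (Y 0 d) \<omega>)^2 \<partial>M) > 0"
    and Q_b: "\<forall>d\<in>{1..K}. integrable M (\<lambda>\<omega>. (Y 0 d \<omega>)^2)"
    and Q_c: "\<forall>d\<in>{1..K}. \<exists>(g::'x \<Rightarrow> real) (h::'x \<Rightarrow> real) (v::'x \<Rightarrow> real) Cg Ch Cv.
                 Cg-lipschitz_on UNIV g \<and> Ch-lipschitz_on UNIV h \<and> Cv-lipschitz_on UNIV v \<and>
                 (AE \<omega> in M. real_cond_exp M (sigma_of M (X 0)) (Y 0 d) \<omega> = g (X 0 \<omega>)) \<and>
                 (AE \<omega> in M. real_cond_exp M (sigma_of M (X 0)) (\<lambda>\<omega>. (Y 0 d \<omega>)^2) \<omega> = h (X 0 \<omega>)) \<and>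
                 (AE \<omega> in M. v (X 0 \<omega>) = h (X 0 \<omega>) - (g (X 0 \<omega>))^2)"
    \<comment> \<open>blocks lam n j (X^(n)), j < n, partition {0..<K*n} into sets of K elements\<close>
    and blocks: "\<forall>n xs. (\<forall>j<n. lam n j xs \<subseteq> {..<K*n} \<and> card (lam n j xs) = K) \<and>
                  (\<forall>j<n. \<forall>j'<n. j \<noteq> j' \<longrightarrow> lam n j xs \<inter> lam n j' xs = {}) \<and>
                  (\<Union>j<n. lam n j xs) = {..<K*n}"
    and blocks_dep: "\<forall>n j xs xs'. (\<forall>i<K*n. xs i = xs' i) \<longrightarrow> lam n j xs = lam n j xs'"
    and blocks_meas: "\<forall>n j. (\<lambda>\<omega>. lam n j (\<lambda>i. X i \<omega>)) \<in> M \<rightarrow>\<^sub>M count_space UNIV"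
    and D_meas: "\<forall>n i. D n i \<in> M \<rightarrow>\<^sub>M count_space UNIV"
    \<comment> \<open>Condition MT: conditional law of D^(n) given W^(n) is uniform on the assignments that
        are permutations of the treatments within each block (i.e. independent uniform
        permutations across blocks), depending on W^(n) only through X^(n)\<close>
    and MT: "\<forall>n. \<forall>B\<in>sets (PiM {..<K*n} (\<lambda>_. unit_space K)). \<forall>a.
               measure M {\<omega>\<in>space M. restrict (\<lambda>i. unit_rv K Y X i \<omega>) {..<K*n} \<in> B \<and>
                                      restrict (\<lambda>i. D n i \<omega>) {..<K*n} = a}
             = (\<integral>\<omega>. indicator B (restrict (\<lambda>i. unit_rv K Y X i \<omega>) {..<K*n}) *
                     pmf (pmf_of_set (block_assignments K n (\<lambda>j. lam n j (\<lambda>i. X i \<omega>)))) a \<partial>M)"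
    \<comment> \<open>Condition Close\<close>
    and Close: "conv_in_prob M (\<lambda>n \<omega>. (1 / real n) * (\<Sum>j<n.
                  Max {(norm (X i \<omega> - X k \<omega>))^2 | i k.
                        i \<in> lam n j (\<lambda>i. X i \<omega>) \<and> k \<in> lam n j (\<lambda>i. X i \<omega>)})) 0"
  shows "\<forall>r\<in>{1::nat, 2}. \<forall>d\<in>{1..K}.
           conv_in_prob M (\<lambda>n \<omega>. (1 / real n) * (\<Sum>i<K*n. (Y i d \<omega>)^r * of_bool (D n i \<omega> = d)))
                          (\<integral>\<omega>. (Y 0 d \<omega>)^r \<partial>M)"
proof -
  have "iid_block_randomized_design M (unit_space K) K (unit_rv K Y X) D (\<lambda>n j \<omega>. lam n j (\<lambda>i. X i \<omega>))"
  proof (intro iid_block_randomized_design.intro block_randomized_design.intro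
      iid_block_randomized_design_axioms.intro block_randomized_design_axioms.intro M)
    show "unit_rv K Y X i \<in> M \<rightarrow>\<^sub>M unit_space K" for i
      using indep by (simp add: prob_space.indep_vars_def[OF M])
    show "block_partition K n (\<lambda>j. lam n j (\<lambda>i. X i \<omega>))" for n \<omega>
      unfolding block_partition_def using blocks by blast
  qed (use K indep ident blocks_meas D_meas MT in auto)
  then show ?thesis
    using conv_in_prob_treated_moment Q_b by blast
qed

end
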